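(* Let $g\ge 1$ be an integer. Then: (a) every shadow of genus $g$ over one backbone contains at least $2g$ and at most $6g-2$ arcs; in particular, for fixed $g$ there are only finitely many shadows of genus $g$ over one backbone; (b) for every integer $\ell$ with $2g\le \ell\le 6g-2$ there exists a shadow of genus $g$ over one backbone containing exactly $\ell$ arcs.
   Context: A diagram over $b$ backbones consists of the vertex set $[N]=\{1,\dots,N\}$, a partition of $[N]$ into $b$ backbones (maximal blocks of consecutive integers, ordered left to right), and a set of arcs $(i,j)$ with $i<j$, each vertex being incident to at most one arc. It is drawn with the vertices in increasing order on a horizontal line, each backbone as a segment joining its consecutive vertices, and the arcs in the upper half-plane. Two arcs $(i,j),(k,l)$ cross if $i<k<j<l$ or $k<i<l<j$. Genus: collapsing each backbone to a single vertex, the planar drawing determines a fatgraph (ribbon graph) with $b$ vertices and one edge per arc, hence an oriented surface with boundary; let $r$ be its number of boundary components (a backbone carrying no arcs contributes one boundary component). With $n$ the number of arcs, the genus $g$ is defined by $2-2g-r=b-n$ (for a connected diagram this is the genus of the associated surface). A stack is a maximal collection of arcs of the form $(i,j),(i+1,j-1),\dots,(i+\ell-1,j-\ell+1)$; its size is $\ell$. An arc is non-crossing if no other arc of the diagram crosses it; a vertex is isolated if no arc is incident to it. A shadow is a diagram with no non-crossing arcs and no isolated vertices in which every stack has size one. *)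

theory Defs
  imports Main
begin

definition diagram1 :: "nat \<Rightarrow> (nat \<times> nat) set \<Rightarrow> bool" where
  "diagram1 N A \<longleftrightarrow> 1 \<le> N \<and>
     (\<forall>(i,j)\<in>A. 1 \<le> i \<and> i < j \<and> j \<le> N) \<and>
     (\<forall>a\<in>A. \<forall>b\<in>A. a \<noteq> b \<longrightarrow>
        {fst a, snd a} \<inter> {fst b, snd b} = {})"

definition crosses :: "nat \<times> nat \<Rightarrow> nat \<times> nat \<Rightarrow> bool" where
  "crosses a b \<longleftrightarrow> (case a of (i,j) \<Rightarrow> case b of (k,l) \<Rightarrow>
      (i < k \<and> k < j \<and> j < l) \<or> (k < i \<and> i < l \<and> l < j))"

definition incident :: "(nat \<times> nat) set \<Rightarrow> nat \<Rightarrow> bool" where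
  "incident A v \<longleftrightarrow> (\<exists>(i,j)\<in>A. v = i \<or> v = j)"

text \<open>Shadow: no non-crossing arcs, no isolated vertices, all stacks of size one
(i.e. no two arcs (i,j),(i+1,j-1) both present).\<close>

definition shadow1 :: "nat \<Rightarrow> (nat \<times> nat) set \<Rightarrow> bool" where
  "shadow1 N A \<longleftrightarrow> diagram1 N A \<and>
     (\<forall>a\<in>A. \<exists>b\<in>A. crosses a b) \<and>
     (\<forall>v\<in>{1..N}. incident A v) \<and>
     (\<forall>(i,j)\<in>A. (i+1, j-1) \<notin> A)"

text \<open>Fatgraph of a one-backbone diagram: backbone cycle gamma and arc
involution sigma (fixing isolated vertices); boundary components are the
cycles of gamma \<circ> sigma on {1..N}.\<close>

definition backbone_perm :: "nat \<Rightarrow> nat \<Rightarrow> nat" where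
  "backbone_perm N v = (if v \<in> {1..<N} then v + 1 else if v = N then 1 else v)"

definition arc_perm :: "(nat \<times> nat) set \<Rightarrow> nat \<Rightarrow> nat" where
  "arc_perm A v = (if \<exists>w. (v,w) \<in> A then (THE w. (v,w) \<in> A)
                   else if \<exists>w. (w,v) \<in> A then (THE w. (w,v) \<in> A) else v)"

definition orbit_of :: "(nat \<Rightarrow> nat) \<Rightarrow> nat \<Rightarrow> nat set" where
  "orbit_of p v = {(p ^^ k) v | k. True}"

definition boundary_components :: "nat \<Rightarrow> (nat \<times> nat) set \<Rightarrow> nat" where
  "boundary_components N A =
     card ((\<lambda>v. orbit_of (backbone_perm N \<circ> arc_perm A) v) ` {1..N})"

text \<open>Genus g defined by 2 - 2g - r = b - n with b = 1, n = number of arcs.\<close>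

definition has_genus :: "nat \<Rightarrow> (nat \<times> nat) set \<Rightarrow> nat \<Rightarrow> bool" where
  "has_genus N A g \<longleftrightarrow>
     2 - 2 * int g - int (boundary_components N A) = 1 - int (card A)"

end

theory Submission
  imports Defs "HOL-Combinatorics.Orbits"
begin

text \<open>A shadow over one backbone with n arcs has N = 2n vertices, and its boundary components
  are the cycles of the permutation \<gamma>\<sigma> (arc involution followed by the backbone rotation).
  In a shadow \<gamma>\<sigma> has no fixed point (it would come from an arc joining neighbouring vertices,
  or from the arc (1, N), and no arc can cross these), and a 2-cycle avoiding the vertex 1 would
  come from a stack of size two. So every boundary component has length at least 3, except the
  one through 1, which has length at least 2. Hence 3r \<le> 2n + 1, and together with
  2g = n + 1 - r and r \<ge> 1 this gives 2g \<le> n \<le> 6g - 2.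

  Conversely, placing two shadows side by side on one backbone adds genera and numbers of arcs:
  the new boundary permutation is the juxtaposition of the old ones followed by the transposition
  of their first vertices, and this transposition merges two cycles. Gluing genus 1 shadows with
  2, 3 or 4 arcs onto a shadow of genus g - 1 reaches every number of arcs up to 6g - 4; the values
  6g - 3 and 6g - 2 come from an explicit family whose boundary components all have length 3,
  except for one of length 2 in the second case.\<close>

section \<open>Cycles of permutations\<close>

lemma orbit_of_eq_orbit: "permutation f \<Longrightarrow> orbit_of f x = orbit f x"
  by (simp add: orbit_of_def orbit_altdef_permutation)

lemma card_orbit_eq_2:
  assumes "f (f x) = x" "f x \<noteq> x"
  shows "card (orbit f x) = 2"
proof -
  have "(f ^^ 2) x = x" using assms(1) by (simp add: numeral_2_eq_2)
  then have "orbit f x = (\<lambda>n. (f ^^ n) x) ` {..<2}"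
    by (subst orbit_altdef_bounded) auto
  also have "\<dots> = {x, f x}" by (simp add: lessThan_nat_numeral lessThan_Suc insert_commute)
  finally show ?thesis using assms(2) by simp
qed

lemma card_orbit_eq_3:
  assumes "f (f (f x)) = x" "f x \<noteq> x"
  shows "card (orbit f x) = 3"
proof -
  have "(f ^^ 3) x = x" using assms(1) by (simp add: numeral_3_eq_3)
  then have "orbit f x = (\<lambda>n. (f ^^ n) x) ` {..<3}"
    by (subst orbit_altdef_bounded) auto
  also have "\<dots> = {x, f x, f (f x)}"
    by (simp add: lessThan_nat_numeral lessThan_Suc numeral_2_eq_2 insert_commute)
  finally show ?thesis using assms by (auto simp: card_insert_if)
qed

context
  fixes f :: "'a \<Rightarrow> 'a" and S :: "'a set"
  assumes perm: "f permutes S" and fin: "finite S"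
begin

lemma permutes_self_in_orbit: "x \<in> orbit f x"
  by (rule permutation_self_in_orbit[OF permutes_imp_permutation[OF fin perm]])

lemma permutes_orbit_eq: "y \<in> orbit f x \<Longrightarrow> orbit f y = orbit f x"
  using cyclic_on_orbit[OF perm fin] orbit_cyclic_eq3 by metis

lemma permutes_finite_orbit: "finite (orbit f x)"
  by (rule finite_orbit[OF permutes_self_in_orbit])

lemma card_eq_sum_card_orbits: "card S = (\<Sum>B\<in>orbit f ` S. card B)"
proof -
  have "\<Union>(orbit f ` S) = S"
    using permutes_orbit_subset[OF perm] permutes_self_in_orbit by blast
  moreover have "pairwise disjnt (orbit f ` S)"
    unfolding pairwise_def disjnt_def using permutes_orbit_eq by blast
  moreover have "card (\<Union>(orbit f ` S)) = (\<Sum>B\<in>orbit f ` S. card B)"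
    using calculation(2) permutes_finite_orbit by (intro card_Union_disjoint) auto
  ultimately show ?thesis by simp
qed

lemma image_orbit_Diff_orbit: "orbit f ` S - {orbit f s} = orbit f ` (S - orbit f s)"
  using permutes_orbit_eq permutes_self_in_orbit by blast

lemma card_eq_card_orbit_plus_others:
  assumes "s \<in> S"
  shows "card S = card (orbit f s) + (\<Sum>B\<in>orbit f ` (S - orbit f s). card B)"
  using card_eq_sum_card_orbits sum.remove[of "orbit f ` S" "orbit f s" card] assms fin
  by (simp add: image_orbit_Diff_orbit)

lemma card_image_orbit_Diff_orbit:
  assumes "s \<in> S"
  shows "card (orbit f ` (S - orbit f s)) = card (orbit f ` S) - 1"
  using assms fin by (simp flip: image_orbit_Diff_orbit)

lemma card_ge_by_orbits:
  assumes "s \<in> S" and "\<And>v. v \<in> S \<Longrightarrow> v \<notin> orbit f s \<Longrightarrow> c \<le> card (orbit f v)"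
  shows "card (orbit f s) + c * (card (orbit f ` S) - 1) \<le> card S"
proof -
  have "c * card (orbit f ` (S - orbit f s)) \<le> (\<Sum>B\<in>orbit f ` (S - orbit f s). card B)"
    using sum_bounded_below[of "orbit f ` (S - orbit f s)" c card] assms(2)
    by (auto simp: mult.commute)
  then show ?thesis
    using card_eq_card_orbit_plus_others card_image_orbit_Diff_orbit assms(1) by simp
qed

lemma card_eq_by_orbits:
  assumes "s \<in> S" and "\<And>v. v \<in> S \<Longrightarrow> v \<notin> orbit f s \<Longrightarrow> card (orbit f v) = c"
  shows "card S = card (orbit f s) + c * (card (orbit f ` S) - 1)"
proof -
  have "(\<Sum>B\<in>orbit f ` (S - orbit f s). card B) = (\<Sum>B\<in>orbit f ` (S - orbit f s). c)"
    using assms(2) by (intro sum.cong) auto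
  then have "(\<Sum>B\<in>orbit f ` (S - orbit f s). card B) = c * card (orbit f ` (S - orbit f s))"
    by simp
  then show ?thesis
    using card_eq_card_orbit_plus_others card_image_orbit_Diff_orbit assms(1) by simp
qed

lemma orbit_transpose_comp_other:
  assumes "x \<notin> orbit f a \<union> orbit f b"
  shows "orbit (transpose a b \<circ> f) x = orbit f x"
proof (rule orbit_cong[OF permutes_self_in_orbit])
  fix y assume "y \<in> orbit f x"
  then have "f y \<in> orbit f x" by (rule orbit.step)
  then have "f y \<noteq> a" "f y \<noteq> b"
    using assms permutes_orbit_eq permutes_self_in_orbit by blast+
  then show "(transpose a b \<circ> f) y = f y" by simp
qed

lemma orbit_subset_if_closed:
  assumes "c \<in> T" and "\<And>y. y \<in> orbit f c \<Longrightarrow> y \<in> T \<Longrightarrow> f y \<in> T"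
  shows "orbit f c \<subseteq> T"
proof
  fix y assume "y \<in> orbit f c"
  then show "y \<in> T"
    by induction (use assms permutes_self_in_orbit in blast)+
qed

lemma orbit_transpose_comp_subset: "orbit (transpose a b \<circ> f) a \<subseteq> orbit f a \<union> orbit f b"
proof
  fix y assume "y \<in> orbit (transpose a b \<circ> f) a"
  then show "y \<in> orbit f a \<union> orbit f b"
  proof induction
    case base
    have "f a \<in> orbit f a" by (rule orbit.base)
    then show ?case using permutes_self_in_orbit by (auto simp: transpose_def)
  next
    case (step y)
    then have "f y \<in> orbit f a \<union> orbit f b" using orbit.step[of y f] by blast
    then show ?case using permutes_self_in_orbit by (auto simp: transpose_def)
  qed
qed

lemma orbit_transpose_comp:
  assumes b: "b \<notin> orbit f a"
  shows "orbit (transpose a b \<circ> f) a = orbit f a \<union> orbit f b"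
proof
  let ?T = "orbit (transpose a b \<circ> f) a"
  have T_step: "(transpose a b \<circ> f) y \<in> ?T" if "y \<in> ?T" for y using that by (rule orbit.step)
  have "permutation (transpose a b \<circ> f)"
    by (rule permutation_compose[OF permutation_swap_id permutes_imp_permutation[OF fin perm]])
  then have "a \<in> ?T" by (rule permutation_self_in_orbit)
  have a_orbit: "orbit f a \<subseteq> ?T"
  proof (rule orbit_subset_if_closed[OF \<open>a \<in> ?T\<close>])
    fix y assume y: "y \<in> orbit f a" "y \<in> ?T"
    have "f y \<noteq> b" using b orbit.step[OF y(1)] by blast
    then show "f y \<in> ?T"
      using T_step[OF y(2)] \<open>a \<in> ?T\<close> by (cases "f y = a") auto
  qed
  have "b \<in> ?T"
  proof -
    have "a \<in> orbit f a" by (rule permutes_self_in_orbit)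
    then obtain s where "s \<in> orbit f a" "f s = a"
      by (cases rule: orbit.cases) (metis permutes_self_in_orbit)+
    then show ?thesis using T_step[of s] a_orbit by auto
  qed
  have "orbit f b \<subseteq> ?T"
  proof (rule orbit_subset_if_closed[OF \<open>b \<in> ?T\<close>])
    fix y assume y: "y \<in> orbit f b" "y \<in> ?T"
    have "f y \<noteq> a"
      using b orbit.step[OF y(1)] permutes_orbit_eq permutes_self_in_orbit by metis
    then show "f y \<in> ?T"
      using T_step[OF y(2)] \<open>b \<in> ?T\<close> by (cases "f y = b") auto
  qed
  with a_orbit show "orbit f a \<union> orbit f b \<subseteq> ?T" by blast
qed (rule orbit_transpose_comp_subset)

end

lemma card_orbits_transpose_comp:
  assumes perm: "f permutes S" and fin: "finite S" and "a \<in> S" "b \<in> S" "b \<notin> orbit f a"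
  shows "card (orbit (transpose a b \<circ> f) ` S) = card (orbit f ` S) - 1"
proof -
  let ?g = "transpose a b \<circ> f" and ?U = "orbit f a \<union> orbit f b"
  let ?R = "orbit f ` (S - ?U)"
  have perm_g: "?g permutes S" using permutes_compose[OF perm permutes_swap_id[OF assms(3,4)]] .
  have U: "orbit ?g a = ?U" using orbit_transpose_comp[OF perm fin assms(5)] .
  have "orbit ?g ` S = insert ?U ?R"
  proof (intro equalityI subsetI)
    fix B assume "B \<in> orbit ?g ` S"
    then obtain x where x: "x \<in> S" "B = orbit ?g x" by blast
    show "B \<in> insert ?U ?R"
    proof (cases "x \<in> ?U")
      case True
      then show ?thesis using x permutes_orbit_eq[OF perm_g fin, of x a] U by simp
    next
      case False
      then show ?thesis using x orbit_transpose_comp_other[OF perm fin False] by blast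
    qed
  next
    fix B assume "B \<in> insert ?U ?R"
    then consider "B = ?U" | x where "x \<in> S" "x \<notin> ?U" "B = orbit f x" by blast
    then show "B \<in> orbit ?g ` S"
    proof cases
      case 1
      then show ?thesis using U assms(3) by blast
    next
      case 2
      then show ?thesis using orbit_transpose_comp_other[OF perm fin 2(2)] by blast
    qed
  qed
  moreover have "orbit f ` S = insert (orbit f a) (insert (orbit f b) ?R)"
    using assms permutes_orbit_eq[OF perm fin] permutes_self_in_orbit[OF perm fin] by auto
  moreover have "?U \<notin> ?R" "orbit f a \<notin> ?R" "orbit f b \<notin> ?R" "orbit f a \<noteq> orbit f b"
    using assms(5) permutes_self_in_orbit[OF perm fin] by auto
  ultimately show ?thesis using fin by simp
qed

section \<open>The boundary permutation of a diagram\<close>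

definition boundary_perm :: "nat \<Rightarrow> (nat \<times> nat) set \<Rightarrow> nat \<Rightarrow> nat" where
  "boundary_perm N A = backbone_perm N \<circ> arc_perm A"

lemma diagram_arcD:
  assumes "diagram1 N A" "(i,j) \<in> A"
  shows "1 \<le> i" "i < j" "j \<le> N"
  using assms unfolding diagram1_def by auto

lemma diagram_arcs_disjoint:
  assumes "diagram1 N A" "a \<in> A" "b \<in> A" "a \<noteq> b"
  shows "{fst a, snd a} \<inter> {fst b, snd b} = {}"
  using assms unfolding diagram1_def by blast

lemma diagram_arcs_subset:
  assumes "diagram1 N A"
  shows "A \<subseteq> {1..N} \<times> {1..N}"
proof
  fix a assume "a \<in> A"
  then show "a \<in> {1..N} \<times> {1..N}"
    using diagram_arcD[OF assms, of "fst a" "snd a"] by (simp add: mem_Times_iff)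
qed

lemma finite_diagram_arcs: "diagram1 N A \<Longrightarrow> finite A"
  using finite_subset[OF diagram_arcs_subset] by simp

lemma arc_perm_arc:
  assumes d: "diagram1 N A" and ij: "(i,j) \<in> A"
  shows "arc_perm A i = j" "arc_perm A j = i"
proof -
  have same: "a = (i,j)" if "a \<in> A" "{fst a, snd a} \<inter> {i, j} \<noteq> {}" for a
  proof (rule ccontr)
    assume "a \<noteq> (i,j)"
    then have "{fst a, snd a} \<inter> {fst (i,j), snd (i,j)} = {}"
      by (rule diagram_arcs_disjoint[OF d that(1) ij])
    with that(2) show False by simp
  qed
  have "i < j" using diagram_arcD(2)[OF d ij] .
  have left: "(THE w. (i,w) \<in> A) = j"
  proof (rule the_equality)
    fix w assume "(i,w) \<in> A"
    then show "w = j" using same[of "(i,w)"] by simp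
  qed (rule ij)
  have right: "(THE w. (w,j) \<in> A) = i"
  proof (rule the_equality)
    fix w assume "(w,j) \<in> A"
    then show "w = i" using same[of "(w,j)"] by simp
  qed (rule ij)
  have "(j,w) \<notin> A" for w
  proof
    assume "(j,w) \<in> A"
    then show False using same[of "(j,w)"] \<open>i < j\<close> by simp
  qed
  then show "arc_perm A i = j" "arc_perm A j = i"
    unfolding arc_perm_def using ij left right by auto
qed

lemma arc_perm_isolated: "\<not> incident A v \<Longrightarrow> arc_perm A v = v"
  unfolding incident_def arc_perm_def by auto

lemma arc_perm_incident:
  assumes d: "diagram1 N A" and "incident A v"
  shows "(v, arc_perm A v) \<in> A \<or> (arc_perm A v, v) \<in> A"
proof -
  obtain i j where ij: "(i,j) \<in> A" "v = i \<or> v = j" using assms(2) by (auto simp: incident_def)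
  then show ?thesis using arc_perm_arc[OF d ij(1)] by auto
qed

lemma arc_perm_arc_perm:
  assumes d: "diagram1 N A"
  shows "arc_perm A (arc_perm A v) = v"
proof (cases "incident A v")
  case True
  then consider "(v, arc_perm A v) \<in> A" | "(arc_perm A v, v) \<in> A"
    using arc_perm_incident[OF d] by blast
  then show ?thesis
  proof cases
    case 1
    then show ?thesis by (rule arc_perm_arc(2)[OF d])
  next
    case 2
    then show ?thesis by (rule arc_perm_arc(1)[OF d])
  qed
qed (simp add: arc_perm_isolated)

lemma arc_perm_permutes:
  assumes d: "diagram1 N A"
  shows "arc_perm A permutes {1..N}"
proof -
  have "arc_perm A v = v" if "v \<notin> {1..N}" for v
    using that diagram_arcs_subset[OF d] by (intro arc_perm_isolated) (auto simp: incident_def)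
  moreover have "\<exists>!x. arc_perm A x = y" for y
    by (rule ex1I[of _ "arc_perm A y"]) (use arc_perm_arc_perm[OF d] in metis)+
  ultimately show ?thesis unfolding permutes_def by blast
qed

lemma backbone_perm_permutes: "1 \<le> N \<Longrightarrow> backbone_perm N permutes {1..N}"
  by (rule inj_imp_permutes) (auto simp: backbone_perm_def inj_on_def)

lemma boundary_perm_permutes: "diagram1 N A \<Longrightarrow> boundary_perm N A permutes {1..N}"
  unfolding boundary_perm_def
  by (rule permutes_compose[OF arc_perm_permutes backbone_perm_permutes]) (auto simp: diagram1_def)

lemma boundary_components_eq:
  assumes "diagram1 N A"
  shows "boundary_components N A = card (orbit (boundary_perm N A) ` {1..N})"
proof -
  have "permutation (boundary_perm N A)"
    using boundary_perm_permutes[OF assms] permutation_permutes by blast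
  then show ?thesis
    unfolding boundary_components_def boundary_perm_def[symmetric] by (simp add: orbit_of_eq_orbit)
qed

lemma boundary_components_pos:
  assumes d: "diagram1 N A"
  shows "1 \<le> boundary_components N A"
proof -
  have "1 \<le> N" using d by (simp add: diagram1_def)
  then show ?thesis by (simp add: boundary_components_eq[OF d] Suc_le_eq card_gt_0_iff)
qed

lemma card_arcs_eq:
  assumes d: "diagram1 N A" and inc: "\<forall>v\<in>{1..N}. incident A v"
  shows "N = 2 * card A"
proof -
  have "(\<Union>a\<in>A. {fst a, snd a}) = {1..N}"
    using diagram_arcs_subset[OF d] inc unfolding incident_def by fastforce
  moreover have "card (\<Union>a\<in>A. {fst a, snd a}) = (\<Sum>a\<in>A. card {fst a, snd a})"
    using finite_diagram_arcs[OF d] diagram_arcs_disjoint[OF d] by (intro card_UN_disjoint) auto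
  moreover have "card {fst a, snd a} = 2" if "a \<in> A" for a
    using that diagram_arcD(2)[OF d] by (cases a) fastforce
  ultimately show ?thesis by simp
qed

lemma has_genus_iff: "has_genus N A g \<longleftrightarrow> 2 * g + boundary_components N A = card A + 1"
  unfolding has_genus_def by (intro iffI) linarith+

section \<open>Shadows: the bounds on the number of arcs\<close>

lemma shadow_diagram: "shadow1 N A \<Longrightarrow> diagram1 N A"
  by (simp add: shadow1_def)

lemma shadow_incident: "shadow1 N A \<Longrightarrow> v \<in> {1..N} \<Longrightarrow> incident A v"
  by (simp add: shadow1_def)

lemma shadow_crossing: "shadow1 N A \<Longrightarrow> a \<in> A \<Longrightarrow> \<exists>b\<in>A. crosses a b"
  by (simp add: shadow1_def)

lemma shadow_no_stack: "shadow1 N A \<Longrightarrow> (i,j) \<in> A \<Longrightarrow> (i + 1, j - 1) \<notin> A"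
  by (auto simp: shadow1_def)

lemma shadow_arc_perm:
  assumes sh: "shadow1 N A" and v: "v \<in> {1..N}"
  shows "arc_perm A v \<in> {1..N}" "arc_perm A v \<noteq> v"
    and "v < arc_perm A v \<Longrightarrow> (v, arc_perm A v) \<in> A"
    and "arc_perm A v < v \<Longrightarrow> (arc_perm A v, v) \<in> A"
proof -
  have d: "diagram1 N A" using sh by (rule shadow_diagram)
  have "incident A v" by (rule shadow_incident[OF sh v])
  then have arc: "(v, arc_perm A v) \<in> A \<or> (arc_perm A v, v) \<in> A"
    by (rule arc_perm_incident[OF d])
  show "arc_perm A v \<in> {1..N}" by (rule permutes_in_image[OF arc_perm_permutes[OF d], THEN iffD2, OF v])
  show "arc_perm A v \<noteq> v" "v < arc_perm A v \<Longrightarrow> (v, arc_perm A v) \<in> A"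
    "arc_perm A v < v \<Longrightarrow> (arc_perm A v, v) \<in> A"
    using arc diagram_arcD(2)[OF d, of v "arc_perm A v"] diagram_arcD(2)[OF d, of "arc_perm A v" v]
    by auto
qed

lemma shadow_card_arcs: "shadow1 N A \<Longrightarrow> N = 2 * card A"
  by (rule card_arcs_eq) (auto simp: shadow1_def)

lemma shadow_boundary_perm_neq:
  assumes sh: "shadow1 N A" and v: "v \<in> {1..N}"
  shows "boundary_perm N A v \<noteq> v"
proof
  assume fixed: "boundary_perm N A v = v"
  have d: "diagram1 N A" using sh by (rule shadow_diagram)
  let ?w = "arc_perm A v"
  note w = shadow_arc_perm[OF sh v]
  have "backbone_perm N ?w = v" using fixed by (simp add: boundary_perm_def)
  with w have "(?w, v) \<in> A \<and> v = ?w + 1 \<or> (v, ?w) \<in> A \<and> v = 1 \<and> ?w = N"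
    by (auto simp: backbone_perm_def split: if_splits)
  then obtain i j where ij: "(i,j) \<in> A" "j = i + 1 \<or> i = 1 \<and> j = N" by blast
  obtain k l where kl: "(k,l) \<in> A" "crosses (i,j) (k,l)"
    using shadow_crossing[OF sh ij(1)] by auto
  show False
    using ij(2) kl(2) diagram_arcD[OF d kl(1)] unfolding crosses_def by auto
qed

text \<open>A 2-cycle v \<mapsto> w \<mapsto> v avoiding 1 forces the arcs (v, w - 1) and (v - 1, w) (or the same
  with v and w exchanged), a stack of size two.\<close>

lemma shadow_boundary_perm_2cycle:
  assumes sh: "shadow1 N A" and v: "v \<in> {1..N}"
    and twice: "boundary_perm N A (boundary_perm N A v) = v"
  shows "v = 1 \<or> boundary_perm N A v = 1"
proof (rule ccontr)
  assume nn: "\<not> (v = 1 \<or> boundary_perm N A v = 1)"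
  have d: "diagram1 N A" using sh by (rule shadow_diagram)
  let ?w = "boundary_perm N A v" and ?s = "arc_perm A"
  have w: "?w \<in> {1..N}" by (rule permutes_in_image[OF boundary_perm_permutes[OF d], THEN iffD2, OF v])
  note arc_v = shadow_arc_perm[OF sh v] and arc_w = shadow_arc_perm[OF sh w]
  have s: "?s v = ?w - 1" "?s ?w = v - 1"
    using arc_v(1) arc_w(1) nn twice by (auto simp: boundary_perm_def backbone_perm_def split: if_splits)
  note nostack = shadow_no_stack[OF sh]
  have "2 \<le> v" "2 \<le> ?w" using nn v w by auto
  show False
  proof (cases "v < ?w")
    case True
    have "(v, ?w - 1) \<in> A" using arc_v s True by auto
    moreover have "(v - 1, ?w) \<in> A" using arc_w s True by auto
    ultimately show False using nostack[of "v - 1" ?w] \<open>2 \<le> v\<close> by simp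
  next
    case False
    then have "?w < v" using shadow_boundary_perm_neq[OF sh v] by simp
    have "(?w, v - 1) \<in> A" using arc_w s \<open>?w < v\<close> by auto
    moreover have "(?w - 1, v) \<in> A" using arc_v s \<open>?w < v\<close> by auto
    ultimately show False using nostack[of "?w - 1" v] \<open>2 \<le> ?w\<close> by simp
  qed
qed

lemma shadow_card_orbit:
  assumes sh: "shadow1 N A" and v: "v \<in> {1..N}"
  shows "2 \<le> card (orbit (boundary_perm N A) v)"
    and "1 \<notin> orbit (boundary_perm N A) v \<Longrightarrow> 3 \<le> card (orbit (boundary_perm N A) v)"
proof -
  let ?p = "boundary_perm N A"
  have perm: "?p permutes {1..N}" using boundary_perm_permutes[OF shadow_diagram[OF sh]] .
  have fin: "finite (orbit ?p v)" by (rule permutes_finite_orbit[OF perm finite_atLeastAtMost])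
  have "?p v \<in> orbit ?p v" by (rule orbit.base)
  then have mem: "v \<in> orbit ?p v" "?p v \<in> orbit ?p v" "?p (?p v) \<in> orbit ?p v"
    using permutes_self_in_orbit[OF perm finite_atLeastAtMost] orbit.step by auto
  have pv: "?p v \<in> {1..N}" by (rule permutes_in_image[OF perm, THEN iffD2, OF v])
  have neq: "?p v \<noteq> v" "?p (?p v) \<noteq> ?p v"
    using shadow_boundary_perm_neq[OF sh v] shadow_boundary_perm_neq[OF sh pv] by auto
  have "card {v, ?p v} \<le> card (orbit ?p v)" using fin mem by (intro card_mono) auto
  then show "2 \<le> card (orbit ?p v)" using neq by simp
  assume "1 \<notin> orbit ?p v"
  then have "?p (?p v) \<noteq> v" using shadow_boundary_perm_2cycle[OF sh v] mem by auto
  moreover have "card {v, ?p v, ?p (?p v)} \<le> card (orbit ?p v)" using fin mem by (intro card_mono) auto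
  ultimately show "3 \<le> card (orbit ?p v)" using neq by simp
qed

lemma shadow_boundary_components_le:
  assumes sh: "shadow1 N A"
  shows "3 * boundary_components N A \<le> N + 1"
proof -
  have d: "diagram1 N A" using sh by (rule shadow_diagram)
  have one: "1 \<in> {1..N}" using d by (simp add: diagram1_def)
  let ?p = "boundary_perm N A"
  have perm: "?p permutes {1..N}" by (rule boundary_perm_permutes[OF d])
  have "3 \<le> card (orbit ?p v)" if "v \<in> {1..N}" "v \<notin> orbit ?p 1" for v
  proof (rule shadow_card_orbit(2)[OF sh that(1)])
    show "1 \<notin> orbit ?p v"
      using that(2) orbit_swap[OF permutes_self_in_orbit[OF perm finite_atLeastAtMost]] by blast
  qed
  then have "card (orbit ?p 1) + 3 * (card (orbit ?p ` {1..N}) - 1) \<le> N"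
    using card_ge_by_orbits[OF perm finite_atLeastAtMost one, of 3] by simp
  then have "card (orbit ?p 1) + 3 * (boundary_components N A - 1) \<le> N"
    by (simp add: boundary_components_eq[OF d])
  then show ?thesis
    using shadow_card_orbit(1)[OF sh one] boundary_components_pos[OF d] by linarith
qed

lemma shadow_card_arcs_bounds:
  assumes sh: "shadow1 N A" and g: "has_genus N A g"
  shows "2 * g \<le> card A" "card A \<le> 6 * g - 2"
  using g shadow_boundary_components_le[OF sh] boundary_components_pos[OF shadow_diagram[OF sh]]
    shadow_card_arcs[OF sh] unfolding has_genus_iff by linarith+

section \<open>Concatenation of diagrams\<close>

definition shift_arcs :: "nat \<Rightarrow> (nat \<times> nat) set \<Rightarrow> (nat \<times> nat) set" where
  "shift_arcs k A = (\<lambda>(i,j). (i + k, j + k)) ` A"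

definition concat_arcs :: "nat \<Rightarrow> (nat \<times> nat) set \<Rightarrow> (nat \<times> nat) set \<Rightarrow> (nat \<times> nat) set" where
  "concat_arcs N\<^sub>1 A\<^sub>1 A\<^sub>2 = A\<^sub>1 \<union> shift_arcs N\<^sub>1 A\<^sub>2"

definition juxtapose :: "nat \<Rightarrow> (nat \<Rightarrow> nat) \<Rightarrow> (nat \<Rightarrow> nat) \<Rightarrow> nat \<Rightarrow> nat" where
  "juxtapose N\<^sub>1 f g v = (if v \<le> N\<^sub>1 then f v else N\<^sub>1 + g (v - N\<^sub>1))"

lemma mem_shift_arcs: "(i,j) \<in> shift_arcs k A \<longleftrightarrow> k \<le> i \<and> k \<le> j \<and> (i - k, j - k) \<in> A"
  unfolding shift_arcs_def by force

lemma crosses_shift: "crosses (i + k, j + k) (i' + k, j' + k) \<longleftrightarrow> crosses (i,j) (i',j')"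
  by (auto simp: crosses_def)

context
  fixes N\<^sub>1 N\<^sub>2 :: nat and A\<^sub>1 A\<^sub>2 :: "(nat \<times> nat) set"
  assumes d\<^sub>1: "diagram1 N\<^sub>1 A\<^sub>1" and d\<^sub>2: "diagram1 N\<^sub>2 A\<^sub>2"
begin

private lemma shifted_arcD:
  assumes "(i,j) \<in> shift_arcs N\<^sub>1 A\<^sub>2"
  shows "(i - N\<^sub>1, j - N\<^sub>1) \<in> A\<^sub>2" "N\<^sub>1 < i" "i < j" "j \<le> N\<^sub>1 + N\<^sub>2"
  using assms diagram_arcD[OF d\<^sub>2, of "i - N\<^sub>1" "j - N\<^sub>1"] unfolding mem_shift_arcs by auto

lemma concat_diagram: "diagram1 (N\<^sub>1 + N\<^sub>2) (concat_arcs N\<^sub>1 A\<^sub>1 A\<^sub>2)"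
proof -
  let ?A = "concat_arcs N\<^sub>1 A\<^sub>1 A\<^sub>2"
  have "1 \<le> i \<and> i < j \<and> j \<le> N\<^sub>1 + N\<^sub>2" if "(i,j) \<in> ?A" for i j
    using that diagram_arcD[OF d\<^sub>1, of i j] shifted_arcD[of i j] by (auto simp: concat_arcs_def)
  moreover have "{fst a, snd a} \<inter> {fst b, snd b} = {}"
    if a: "a \<in> ?A" and b: "b \<in> ?A" and ab: "a \<noteq> b" for a b
  proof -
    have low: "{fst c, snd c} \<subseteq> {..N\<^sub>1}" if "c \<in> A\<^sub>1" for c
      using that diagram_arcD[OF d\<^sub>1, of "fst c" "snd c"] by auto
    have high: "{fst c, snd c} \<subseteq> {N\<^sub>1<..}" if "c \<in> shift_arcs N\<^sub>1 A\<^sub>2" for c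
      using that shifted_arcD[of "fst c" "snd c"] by auto
    consider "a \<in> A\<^sub>1" "b \<in> A\<^sub>1" | "a \<in> A\<^sub>1" "b \<in> shift_arcs N\<^sub>1 A\<^sub>2"
      | "a \<in> shift_arcs N\<^sub>1 A\<^sub>2" "b \<in> A\<^sub>1" | "a \<in> shift_arcs N\<^sub>1 A\<^sub>2" "b \<in> shift_arcs N\<^sub>1 A\<^sub>2"
      using a b by (auto simp: concat_arcs_def)
    then show ?thesis
    proof cases
      case 1
      then show ?thesis by (rule diagram_arcs_disjoint[OF d\<^sub>1 _ _ ab])
    next
      case 2
      then show ?thesis using low[of a] high[of b] by auto
    next
      case 3
      then show ?thesis using low[of b] high[of a] by auto
    next
      case 4
      then obtain a' b' where "a' \<in> A\<^sub>2" "b' \<in> A\<^sub>2"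
        "a = (fst a' + N\<^sub>1, snd a' + N\<^sub>1)" "b = (fst b' + N\<^sub>1, snd b' + N\<^sub>1)"
        unfolding shift_arcs_def by auto
      moreover from calculation have "a' \<noteq> b'" using ab by auto
      ultimately show ?thesis using diagram_arcs_disjoint[OF d\<^sub>2, of a' b'] by auto
    qed
  qed
  ultimately show ?thesis using d\<^sub>1 unfolding diagram1_def by auto
qed

lemma card_concat_arcs: "card (concat_arcs N\<^sub>1 A\<^sub>1 A\<^sub>2) = card A\<^sub>1 + card A\<^sub>2"
proof -
  have "inj_on (\<lambda>(i,j). (i + N\<^sub>1, j + N\<^sub>1)) A\<^sub>2" by (auto simp: inj_on_def)
  then have "card (shift_arcs N\<^sub>1 A\<^sub>2) = card A\<^sub>2" unfolding shift_arcs_def by (rule card_image)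
  moreover have "(i,j) \<notin> shift_arcs N\<^sub>1 A\<^sub>2" if "(i,j) \<in> A\<^sub>1" for i j
    using diagram_arcD[OF d\<^sub>1 that] shifted_arcD(2)[of i j] by auto
  then have "A\<^sub>1 \<inter> shift_arcs N\<^sub>1 A\<^sub>2 = {}" by auto
  ultimately show ?thesis
    using finite_diagram_arcs[OF d\<^sub>1] finite_diagram_arcs[OF d\<^sub>2]
    by (simp add: concat_arcs_def card_Un_disjoint shift_arcs_def)
qed

lemma incident_concat_arcs:
  "incident (concat_arcs N\<^sub>1 A\<^sub>1 A\<^sub>2) v \<longleftrightarrow> (if v \<le> N\<^sub>1 then incident A\<^sub>1 v else incident A\<^sub>2 (v - N\<^sub>1))"
proof (cases "v \<le> N\<^sub>1")
  case True
  have "(i,j) \<notin> shift_arcs N\<^sub>1 A\<^sub>2" if "v = i \<or> v = j" for i j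
    using True that shifted_arcD(2,3)[of i j] by auto
  then show ?thesis using True by (auto simp: incident_def concat_arcs_def)
next
  case False
  have "(i,j) \<notin> A\<^sub>1" if "v = i \<or> v = j" for i j
    using False that diagram_arcD(2,3)[OF d\<^sub>1, of i j] by auto
  then show ?thesis using False by (force simp: incident_def concat_arcs_def shift_arcs_def)
qed

lemma arc_perm_concat: "arc_perm (concat_arcs N\<^sub>1 A\<^sub>1 A\<^sub>2) = juxtapose N\<^sub>1 (arc_perm A\<^sub>1) (arc_perm A\<^sub>2)"
proof
  fix v
  let ?A = "concat_arcs N\<^sub>1 A\<^sub>1 A\<^sub>2"
  have eqI: "arc_perm ?A v = w" if "(v,w) \<in> ?A \<or> (w,v) \<in> ?A" for w
    using that arc_perm_arc[OF concat_diagram] by auto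
  show "arc_perm ?A v = juxtapose N\<^sub>1 (arc_perm A\<^sub>1) (arc_perm A\<^sub>2) v"
  proof (cases "incident ?A v")
    case False
    then show ?thesis
      using incident_concat_arcs[of v] by (simp add: juxtapose_def arc_perm_isolated split: if_splits)
  next
    case True
    show ?thesis
    proof (cases "v \<le> N\<^sub>1")
      case True
      with \<open>incident ?A v\<close> have "incident A\<^sub>1 v" by (simp add: incident_concat_arcs)
      then show ?thesis
        using True arc_perm_incident[OF d\<^sub>1] eqI by (auto simp: juxtapose_def concat_arcs_def)
    next
      case False
      let ?u = "v - N\<^sub>1"
      from False \<open>incident ?A v\<close> have "incident A\<^sub>2 ?u" by (simp add: incident_concat_arcs)
      then have "(?u + N\<^sub>1, arc_perm A\<^sub>2 ?u + N\<^sub>1) \<in> ?A \<or> (arc_perm A\<^sub>2 ?u + N\<^sub>1, ?u + N\<^sub>1) \<in> ?A"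
        using arc_perm_incident[OF d\<^sub>2] by (auto simp: concat_arcs_def mem_shift_arcs)
      then show ?thesis using False eqI by (simp add: juxtapose_def add.commute)
    qed
  qed
qed

lemma concat_shadow:
  assumes s\<^sub>1: "shadow1 N\<^sub>1 A\<^sub>1" and s\<^sub>2: "shadow1 N\<^sub>2 A\<^sub>2"
  shows "shadow1 (N\<^sub>1 + N\<^sub>2) (concat_arcs N\<^sub>1 A\<^sub>1 A\<^sub>2)"
proof -
  let ?A = "concat_arcs N\<^sub>1 A\<^sub>1 A\<^sub>2"
  have shifted: "(i + N\<^sub>1, j + N\<^sub>1) \<in> ?A" if "(i,j) \<in> A\<^sub>2" for i j
    using that by (simp add: concat_arcs_def mem_shift_arcs)
  have "\<exists>b\<in>?A. crosses a b" if a: "a \<in> ?A" for a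
  proof (cases "a \<in> A\<^sub>1")
    case True
    then show ?thesis using shadow_crossing[OF s\<^sub>1 True] by (auto simp: concat_arcs_def)
  next
    case False
    then obtain i j where a: "a = (i + N\<^sub>1, j + N\<^sub>1)" "(i,j) \<in> A\<^sub>2"
      using a by (auto simp: concat_arcs_def shift_arcs_def)
    obtain k l where "(k,l) \<in> A\<^sub>2" "crosses (i,j) (k,l)"
      using shadow_crossing[OF s\<^sub>2 a(2)] by auto
    then show ?thesis using a shifted crosses_shift by blast
  qed
  moreover have "incident ?A v" if "v \<in> {1..N\<^sub>1 + N\<^sub>2}" for v
  proof (cases "v \<le> N\<^sub>1")
    case True
    then show ?thesis using that shadow_incident[OF s\<^sub>1, of v] by (simp add: incident_concat_arcs)
  next
    case False
    then have "v - N\<^sub>1 \<in> {1..N\<^sub>2}" using that by auto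
    from shadow_incident[OF s\<^sub>2 this] show ?thesis using False by (simp add: incident_concat_arcs)
  qed
  moreover have "(i + 1, j - 1) \<notin> ?A" if "(i,j) \<in> ?A" for i j
  proof (cases "(i,j) \<in> A\<^sub>1")
    case True
    then have "(i + 1, j - 1) \<notin> shift_arcs N\<^sub>1 A\<^sub>2"
      using diagram_arcD(3)[OF d\<^sub>1 True] shifted_arcD(2,3)[of "i + 1" "j - 1"] by auto
    then show ?thesis using shadow_no_stack[OF s\<^sub>1 True] by (simp add: concat_arcs_def)
  next
    case False
    then have ij: "(i - N\<^sub>1, j - N\<^sub>1) \<in> A\<^sub>2" "N\<^sub>1 < i" "i < j"
      using that shifted_arcD by (auto simp: concat_arcs_def)
    then have "(i + 1, j - 1) \<notin> A\<^sub>1" using diagram_arcD(2,3)[OF d\<^sub>1, of "i + 1" "j - 1"] by auto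
    moreover have "(i - N\<^sub>1 + 1, j - N\<^sub>1 - 1) \<notin> A\<^sub>2" by (rule shadow_no_stack[OF s\<^sub>2 ij(1)])
    then have "(i + 1, j - 1) \<notin> shift_arcs N\<^sub>1 A\<^sub>2"
      using ij(2,3) by (auto simp: mem_shift_arcs Suc_diff_le)
    ultimately show ?thesis by (simp add: concat_arcs_def)
  qed
  ultimately show ?thesis using concat_diagram by (auto simp: shadow1_def)
qed

end

lemma juxtapose_comp:
  assumes f': "f' permutes {1..N\<^sub>1}" and g': "g' permutes {1..N\<^sub>2}"
  shows "juxtapose N\<^sub>1 f g \<circ> juxtapose N\<^sub>1 f' g' = juxtapose N\<^sub>1 (f \<circ> f') (g \<circ> g')"
proof
  fix v
  show "(juxtapose N\<^sub>1 f g \<circ> juxtapose N\<^sub>1 f' g') v = juxtapose N\<^sub>1 (f \<circ> f') (g \<circ> g') v"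
  proof (cases "v \<le> N\<^sub>1")
    case True
    then have "f' v \<le> N\<^sub>1"
      using permutes_in_image[OF f', of v] permutes_not_in[OF f', of v] by (cases "v = 0") auto
    with True show ?thesis by (simp add: juxtapose_def)
  next
    case False
    then have "0 < g' (v - N\<^sub>1)"
      using permutes_in_image[OF g', of "v - N\<^sub>1"] permutes_not_in[OF g', of "v - N\<^sub>1"]
      by (cases "v - N\<^sub>1 \<le> N\<^sub>2") auto
    with False show ?thesis by (simp add: juxtapose_def)
  qed
qed

lemma juxtapose_id: "juxtapose N\<^sub>1 id id = id"
  by (auto simp: juxtapose_def)

lemma juxtapose_permutes:
  assumes f: "f permutes {1..N\<^sub>1}" and g: "g permutes {1..N\<^sub>2}"
  shows "juxtapose N\<^sub>1 f g permutes {1..N\<^sub>1 + N\<^sub>2}"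
proof -
  have "bij (juxtapose N\<^sub>1 f g)"
  proof (rule o_bij)
    show "juxtapose N\<^sub>1 (inv f) (inv g) \<circ> juxtapose N\<^sub>1 f g = id"
      by (simp add: juxtapose_comp[OF f g] permutes_inv_o[OF f] permutes_inv_o[OF g] juxtapose_id)
    show "juxtapose N\<^sub>1 f g \<circ> juxtapose N\<^sub>1 (inv f) (inv g) = id"
      by (simp add: juxtapose_comp[OF permutes_inv[OF f] permutes_inv[OF g]] permutes_inv_o[OF f]
          permutes_inv_o[OF g] juxtapose_id)
  qed
  moreover have "juxtapose N\<^sub>1 f g v = v" if "v \<notin> {1..N\<^sub>1 + N\<^sub>2}" for v
  proof (cases "v \<le> N\<^sub>1")
    case True
    then have "v \<notin> {1..N\<^sub>1}" using that by auto
    with True show ?thesis by (simp add: juxtapose_def permutes_not_in[OF f])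
  next
    case False
    then have "v - N\<^sub>1 \<notin> {1..N\<^sub>2}" using that by auto
    with False show ?thesis by (simp add: juxtapose_def permutes_not_in[OF g])
  qed
  ultimately show ?thesis unfolding permutes_def bij_iff by blast
qed

lemma backbone_perm_add:
  assumes "1 \<le> N\<^sub>1" "1 \<le> N\<^sub>2"
  shows "backbone_perm (N\<^sub>1 + N\<^sub>2)
    = transpose 1 (N\<^sub>1 + 1) \<circ> juxtapose N\<^sub>1 (backbone_perm N\<^sub>1) (backbone_perm N\<^sub>2)"
proof
  fix v
  show "backbone_perm (N\<^sub>1 + N\<^sub>2) v
    = (transpose 1 (N\<^sub>1 + 1) \<circ> juxtapose N\<^sub>1 (backbone_perm N\<^sub>1) (backbone_perm N\<^sub>2)) v"
    using assms by (auto simp: backbone_perm_def juxtapose_def transpose_def)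
qed

lemma boundary_perm_concat:
  assumes d\<^sub>1: "diagram1 N\<^sub>1 A\<^sub>1" and d\<^sub>2: "diagram1 N\<^sub>2 A\<^sub>2"
  shows "boundary_perm (N\<^sub>1 + N\<^sub>2) (concat_arcs N\<^sub>1 A\<^sub>1 A\<^sub>2)
    = transpose 1 (N\<^sub>1 + 1) \<circ> juxtapose N\<^sub>1 (boundary_perm N\<^sub>1 A\<^sub>1) (boundary_perm N\<^sub>2 A\<^sub>2)"
proof -
  have "1 \<le> N\<^sub>1" "1 \<le> N\<^sub>2" using d\<^sub>1 d\<^sub>2 by (simp_all add: diagram1_def)
  then show ?thesis
    unfolding boundary_perm_def arc_perm_concat[OF d\<^sub>1 d\<^sub>2] backbone_perm_add[OF \<open>1 \<le> N\<^sub>1\<close> \<open>1 \<le> N\<^sub>2\<close>]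
    by (simp add: comp_assoc juxtapose_comp[OF arc_perm_permutes[OF d\<^sub>1] arc_perm_permutes[OF d\<^sub>2]])
qed

lemma orbit_juxtapose_left:
  assumes f: "f permutes {1..N\<^sub>1}" and v: "v \<in> {1..N\<^sub>1}"
  shows "orbit (juxtapose N\<^sub>1 f g) v = orbit f v"
proof -
  have "y \<in> {1..N\<^sub>1} \<Longrightarrow> f y \<in> {1..N\<^sub>1}" for y by (rule permutes_in_image[OF f, THEN iffD2])
  then show ?thesis by (intro orbit_cong0[OF v]) (auto simp: juxtapose_def)
qed

lemma orbit_juxtapose_right:
  assumes g: "g permutes {1..N\<^sub>2}" and u: "u \<in> {1..N\<^sub>2}"
  shows "orbit (juxtapose N\<^sub>1 f g) (N\<^sub>1 + u) = (+) N\<^sub>1 ` orbit g u"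
proof -
  have g_in: "y \<in> {1..N\<^sub>2} \<Longrightarrow> g y \<in> {1..N\<^sub>2}" for y by (rule permutes_in_image[OF g, THEN iffD2])
  have "(g ^^ n) u \<in> {1..N\<^sub>2} \<and> (juxtapose N\<^sub>1 f g ^^ n) (N\<^sub>1 + u) = N\<^sub>1 + (g ^^ n) u" for n
    by (induction n) (use u g_in in \<open>auto simp: juxtapose_def\<close>)
  then show ?thesis by (auto simp: orbit_altdef)
qed

lemma card_orbits_juxtapose:
  assumes f: "f permutes {1..N\<^sub>1}" and g: "g permutes {1..N\<^sub>2}"
  shows "card (orbit (juxtapose N\<^sub>1 f g) ` {1..N\<^sub>1 + N\<^sub>2})
    = card (orbit f ` {1..N\<^sub>1}) + card (orbit g ` {1..N\<^sub>2})"
proof -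
  let ?q = "juxtapose N\<^sub>1 f g" and ?sh = "image ((+) N\<^sub>1)"
  have S: "{1..N\<^sub>1 + N\<^sub>2} = {1..N\<^sub>1} \<union> (+) N\<^sub>1 ` {1..N\<^sub>2}"
    by (auto simp: image_iff)
  have left: "orbit ?q ` {1..N\<^sub>1} = orbit f ` {1..N\<^sub>1}"
    using orbit_juxtapose_left[OF f] by (intro image_cong) auto
  have right: "orbit ?q ` ((+) N\<^sub>1 ` {1..N\<^sub>2}) = ?sh ` (orbit g ` {1..N\<^sub>2})"
    unfolding image_image using orbit_juxtapose_right[OF g] by (intro image_cong) auto
  have "orbit f ` {1..N\<^sub>1} \<inter> ?sh ` (orbit g ` {1..N\<^sub>2}) = {}"
  proof (rule equals0I)
    fix B assume "B \<in> orbit f ` {1..N\<^sub>1} \<inter> ?sh ` (orbit g ` {1..N\<^sub>2})"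
    then obtain v u where B: "v \<in> {1..N\<^sub>1}" "B = orbit f v" "u \<in> {1..N\<^sub>2}" "B = ?sh (orbit g u)"
      by auto
    obtain x where x: "x \<in> orbit g u" using orbit_nonempty[of g u] by blast
    then have "N\<^sub>1 + x \<in> orbit f v" using B by auto
    then have "N\<^sub>1 + x \<le> N\<^sub>1" using permutes_orbit_subset[OF f B(1)] by auto
    moreover have "1 \<le> x" using x permutes_orbit_subset[OF g B(3)] by auto
    ultimately show False by simp
  qed
  moreover have "inj_on ?sh (orbit g ` {1..N\<^sub>2})" by (auto simp: inj_on_def inj_image_eq_iff)
  ultimately show ?thesis unfolding S image_Un left right
    by (simp add: card_Un_disjoint card_image)
qed

lemma boundary_components_concat:
  assumes d\<^sub>1: "diagram1 N\<^sub>1 A\<^sub>1" and d\<^sub>2: "diagram1 N\<^sub>2 A\<^sub>2"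
  shows "boundary_components (N\<^sub>1 + N\<^sub>2) (concat_arcs N\<^sub>1 A\<^sub>1 A\<^sub>2)
    = boundary_components N\<^sub>1 A\<^sub>1 + boundary_components N\<^sub>2 A\<^sub>2 - 1"
proof -
  let ?q = "juxtapose N\<^sub>1 (boundary_perm N\<^sub>1 A\<^sub>1) (boundary_perm N\<^sub>2 A\<^sub>2)"
  have p\<^sub>1: "boundary_perm N\<^sub>1 A\<^sub>1 permutes {1..N\<^sub>1}" by (rule boundary_perm_permutes[OF d\<^sub>1])
  have p\<^sub>2: "boundary_perm N\<^sub>2 A\<^sub>2 permutes {1..N\<^sub>2}" by (rule boundary_perm_permutes[OF d\<^sub>2])
  have "1 \<le> N\<^sub>1" "1 \<le> N\<^sub>2" using d\<^sub>1 d\<^sub>2 by (simp_all add: diagram1_def)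
  then have ends: "1 \<in> {1..N\<^sub>1 + N\<^sub>2}" "N\<^sub>1 + 1 \<in> {1..N\<^sub>1 + N\<^sub>2}" "1 \<in> {1..N\<^sub>1}" by auto
  have "N\<^sub>1 + 1 \<notin> orbit ?q 1"
    using orbit_juxtapose_left[OF p\<^sub>1 ends(3)] permutes_orbit_subset[OF p\<^sub>1 ends(3)] by auto
  then have "card (orbit (transpose 1 (N\<^sub>1 + 1) \<circ> ?q) ` {1..N\<^sub>1 + N\<^sub>2})
      = card (orbit ?q ` {1..N\<^sub>1 + N\<^sub>2}) - 1"
    using card_orbits_transpose_comp[OF juxtapose_permutes[OF p\<^sub>1 p\<^sub>2] _ ends(1,2)] by simp
  then show ?thesis
    using card_orbits_juxtapose[OF p\<^sub>1 p\<^sub>2] concat_diagram[OF d\<^sub>1 d\<^sub>2]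
    by (simp add: boundary_components_eq d\<^sub>1 d\<^sub>2 boundary_perm_concat)
qed

lemma has_genus_concat:
  assumes d\<^sub>1: "diagram1 N\<^sub>1 A\<^sub>1" and d\<^sub>2: "diagram1 N\<^sub>2 A\<^sub>2"
    and "has_genus N\<^sub>1 A\<^sub>1 g\<^sub>1" "has_genus N\<^sub>2 A\<^sub>2 g\<^sub>2"
  shows "has_genus (N\<^sub>1 + N\<^sub>2) (concat_arcs N\<^sub>1 A\<^sub>1 A\<^sub>2) (g\<^sub>1 + g\<^sub>2)"
  using assms boundary_components_pos[OF d\<^sub>1] boundary_components_pos[OF d\<^sub>2]
  by (simp add: has_genus_iff boundary_components_concat card_concat_arcs)

section \<open>Diagrams given by matchings of labels\<close>

text \<open>Vertices named by labels: pos places the labels on the backbone, the arcs are the pairs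
  of mates, and succ names the next vertex along the backbone. This turns the shadow conditions
  and the boundary permutation into computations on labels.\<close>

locale labelled_diagram =
  fixes N :: nat and L :: "'l set"
    and pos :: "'l \<Rightarrow> nat" and mate :: "'l \<Rightarrow> 'l" and succ :: "'l \<Rightarrow> 'l"
  assumes N_pos: "1 \<le> N"
    and pos_bij: "bij_betw pos L {1..N}"
    and mate_in: "l \<in> L \<Longrightarrow> mate l \<in> L"
    and mate_mate: "l \<in> L \<Longrightarrow> mate (mate l) = l"
    and mate_neq: "l \<in> L \<Longrightarrow> mate l \<noteq> l"
    and succ_in: "l \<in> L \<Longrightarrow> succ l \<in> L"
    and pos_succ: "l \<in> L \<Longrightarrow> pos (succ l) = backbone_perm N (pos l)"
begin

definition arcs :: "(nat \<times> nat) set" where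
  "arcs = {(pos l, pos (mate l)) | l. l \<in> L \<and> pos l < pos (mate l)}"

lemma pos_in: "l \<in> L \<Longrightarrow> pos l \<in> {1..N}"
  by (rule bij_betw_apply[OF pos_bij])

lemma pos_eq_iff: "l \<in> L \<Longrightarrow> l' \<in> L \<Longrightarrow> pos l = pos l' \<longleftrightarrow> l = l'"
  using bij_betw_imp_inj_on[OF pos_bij] by (auto dest: inj_onD)

lemma pos_surj:
  assumes "v \<in> {1..N}"
  shows "\<exists>l\<in>L. pos l = v"
proof -
  have "v \<in> pos ` L" using assms bij_betw_imp_surj_on[OF pos_bij] by simp
  then show ?thesis by blast
qed

lemma arc_of_label:
  assumes l: "l \<in> L"
  shows "(pos l, pos (mate l)) \<in> arcs \<or> (pos (mate l), pos l) \<in> arcs"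
proof -
  have "pos (mate l) \<noteq> pos l" using l mate_in mate_neq pos_eq_iff by blast
  then consider "pos l < pos (mate l)" | "pos (mate l) < pos (mate (mate l))"
    using mate_mate[OF l] by fastforce
  then show ?thesis
  proof cases
    case 1
    then show ?thesis using l unfolding arcs_def by blast
  next
    case 2
    then have "(pos (mate l), pos (mate (mate l))) \<in> arcs" using mate_in[OF l] unfolding arcs_def by blast
    then show ?thesis using mate_mate[OF l] by simp
  qed
qed

lemma arcs_diagram: "diagram1 N arcs"
proof -
  have "1 \<le> i \<and> i < j \<and> j \<le> N" if "(i,j) \<in> arcs" for i j
    using that pos_in mate_in unfolding arcs_def by fastforce
  moreover have "{fst a, snd a} \<inter> {fst b, snd b} = {}"
    if a: "a \<in> arcs" and b: "b \<in> arcs" and ab: "a \<noteq> b" for a b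
  proof -
    obtain l where l: "l \<in> L" "pos l < pos (mate l)" "a = (pos l, pos (mate l))"
      using a unfolding arcs_def by blast
    obtain l' where l': "l' \<in> L" "pos l' < pos (mate l')" "b = (pos l', pos (mate l'))"
      using b unfolding arcs_def by blast
    have "l \<noteq> l'" using ab l l' by auto
    moreover have "l \<noteq> mate l'"
      using l l' mate_mate[OF l'(1)] by auto
    moreover have "mate l \<noteq> l'"
      using l l' mate_mate[OF l(1)] by auto
    moreover have "mate l \<noteq> mate l'"
      using \<open>l \<noteq> l'\<close> mate_mate[OF l(1)] mate_mate[OF l'(1)] by metis
    ultimately show ?thesis
      using l l' pos_eq_iff mate_in by auto
  qed
  ultimately show ?thesis using N_pos unfolding diagram1_def by blast
qed

lemma arcs_incident: "v \<in> {1..N} \<Longrightarrow> incident arcs v"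
  using pos_surj arc_of_label unfolding incident_def by fastforce

lemma arc_perm_pos: "l \<in> L \<Longrightarrow> arc_perm arcs (pos l) = pos (mate l)"
  using arc_of_label arc_perm_arc[OF arcs_diagram] by blast

lemma boundary_perm_pos: "l \<in> L \<Longrightarrow> boundary_perm N arcs (pos l) = pos (succ (mate l))"
  by (simp add: boundary_perm_def arc_perm_pos pos_succ mate_in)

lemma card_arcs: "N = 2 * card arcs"
  using card_arcs_eq[OF arcs_diagram] arcs_incident by blast

lemma arcs_shadow:
  assumes crossing: "\<And>l. l \<in> L \<Longrightarrow> pos l < pos (mate l) \<Longrightarrow>
      \<exists>l'\<in>L. pos l' < pos (mate l') \<and> crosses (pos l, pos (mate l)) (pos l', pos (mate l'))"
    and no_stack: "\<And>l. l \<in> L \<Longrightarrow> pos l < pos (mate l) \<Longrightarrow> succ (mate (succ l)) \<noteq> mate l"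
  shows "shadow1 N arcs"
proof -
  have "\<exists>b\<in>arcs. crosses a b" if "a \<in> arcs" for a
    using that crossing unfolding arcs_def by blast
  moreover have "(i + 1, j - 1) \<notin> arcs" if ij: "(i,j) \<in> arcs" for i j
  proof
    assume "(i + 1, j - 1) \<in> arcs"
    then obtain l' where l': "l' \<in> L" "i + 1 = pos l'" "j - 1 = pos (mate l')"
      unfolding arcs_def by blast
    obtain l where l: "l \<in> L" "pos l < pos (mate l)" "i = pos l" "j = pos (mate l)"
      using ij unfolding arcs_def by blast
    have "j \<le> N" using pos_in[OF mate_in[OF l(1)]] l(4) by simp
    have "pos (succ l) = pos l'"
      using pos_succ[OF l(1)] pos_in[OF l(1)] l(2,3,4) l'(2) \<open>j \<le> N\<close> by (simp add: backbone_perm_def)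
    then have "succ l = l'" using pos_eq_iff succ_in l(1) l'(1) by blast
    have "pos (succ (mate l')) = pos (mate l)"
      using pos_succ[OF mate_in[OF l'(1)]] pos_in[OF mate_in[OF l'(1)]] l'(3) l(4) \<open>j \<le> N\<close>
      by (auto simp: backbone_perm_def)
    then have "succ (mate l') = mate l"
      using pos_eq_iff succ_in mate_in l(1) l'(1) by blast
    then show False using no_stack[OF l(1,2)] \<open>succ l = l'\<close> by simp
  qed
  ultimately show ?thesis
    unfolding shadow1_def using arcs_diagram arcs_incident by blast
qed

lemma card_boundary_orbit_3:
  assumes "l \<in> L" and "succ (mate (succ (mate (succ (mate l))))) = l" and "succ (mate l) \<noteq> l"
  shows "card (orbit (boundary_perm N arcs) (pos l)) = 3"
  using assms by (intro card_orbit_eq_3)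
    (simp_all add: boundary_perm_pos mate_in succ_in pos_eq_iff)

end

section \<open>Shadows with the maximal number of arcs\<close>

text \<open>Labels of an explicit shadow of genus h \<ge> 1 with 6h - 3 + m arcs (m \<le> 1), in backbone
  order: Head 0..3, Extra 0 (only if m = 1), the blocks LBlock u 0..3 for u < h - 1, Mid 0..1,
  the blocks RBlock t 0..7 for t < h - 1, and Extra 1 (only if m = 1). The arcs join Head 0 with
  Head 3, Head (k + 1) with Mid k, Extra 0 with Extra 1, RBlock t 1 with RBlock t 5, RBlock t 3
  with RBlock t 7, and LBlock u 0..3 with the positions 2, 4, 6, 0 of the mirrored block
  RBlock (h - 2 - u).\<close>

datatype fam_label = Head nat | LBlock nat nat | Mid nat | RBlock nat nat | Extra nat

fun fam_valid :: "nat \<Rightarrow> nat \<Rightarrow> fam_label \<Rightarrow> bool" where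
  "fam_valid m h (Head k) \<longleftrightarrow> k < 4"
| "fam_valid m h (LBlock u j) \<longleftrightarrow> u + 2 \<le> h \<and> j < 4"
| "fam_valid m h (Mid k) \<longleftrightarrow> k < 2"
| "fam_valid m h (RBlock t k) \<longleftrightarrow> t + 2 \<le> h \<and> k < 8"
| "fam_valid m h (Extra k) \<longleftrightarrow> m = 1 \<and> k < 2"

definition fam_size :: "nat \<Rightarrow> nat \<Rightarrow> nat" where
  "fam_size m h = 12 * h + 2 * m - 6"

fun fam_pos :: "nat \<Rightarrow> nat \<Rightarrow> fam_label \<Rightarrow> nat" where
  "fam_pos m h (Head k) = k + 1"
| "fam_pos m h (LBlock u j) = 5 + m + 4 * u + j"
| "fam_pos m h (Mid k) = 4 * h + 1 + m + k"
| "fam_pos m h (RBlock t k) = 4 * h + 3 + m + 8 * t + k"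
| "fam_pos m h (Extra k) = (if k = 0 then 5 else fam_size m h)"

fun fam_mate :: "nat \<Rightarrow> fam_label \<Rightarrow> fam_label" where
  "fam_mate h (Head k) = (if k = 0 then Head 3 else if k = 3 then Head 0 else Mid (k - 1))"
| "fam_mate h (Mid k) = Head (k + 1)"
| "fam_mate h (LBlock u j) = RBlock (h - 2 - u) (if j = 3 then 0 else 2 * j + 2)"
| "fam_mate h (RBlock t k) =
    (if odd k then RBlock t (if k < 4 then k + 4 else k - 4)
     else LBlock (h - 2 - t) (if k = 0 then 3 else k div 2 - 1))"
| "fam_mate h (Extra k) = Extra (1 - k)"

fun fam_succ :: "nat \<Rightarrow> nat \<Rightarrow> fam_label \<Rightarrow> fam_label" where
  "fam_succ m h (Head k) =
    (if k < 3 then Head (k + 1) else if m = 1 then Extra 0 else if 2 \<le> h then LBlock 0 0 else Mid 0)"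
| "fam_succ m h (Extra k) = (if k = 0 then (if 2 \<le> h then LBlock 0 0 else Mid 0) else Head 0)"
| "fam_succ m h (LBlock u j) =
    (if j < 3 then LBlock u (j + 1) else if u + 3 \<le> h then LBlock (u + 1) 0 else Mid 0)"
| "fam_succ m h (Mid k) =
    (if k = 0 then Mid 1 else if 2 \<le> h then RBlock 0 0 else if m = 1 then Extra 1 else Head 0)"
| "fam_succ m h (RBlock t k) =
    (if k < 7 then RBlock t (k + 1) else if t + 3 \<le> h then RBlock (t + 1) 0
     else if m = 1 then Extra 1 else Head 0)"

definition fam_index :: "nat \<Rightarrow> nat \<Rightarrow> nat \<Rightarrow> fam_label" where
  "fam_index m h v =
    (if v \<le> 4 then Head (v - 1) else if m = 1 \<and> v = 5 then Extra 0
     else if v \<le> 4 * h + m then LBlock ((v - 5 - m) div 4) ((v - 5 - m) mod 4)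
     else if v \<le> 4 * h + 2 + m then Mid (v - 4 * h - 1 - m)
     else if v \<le> 12 * h + m - 6 then RBlock ((v - 4 * h - 3 - m) div 8) ((v - 4 * h - 3 - m) mod 8)
     else Extra 1)"

definition fam_arcs :: "nat \<Rightarrow> nat \<Rightarrow> (nat \<times> nat) set" where
  "fam_arcs m h = {(fam_pos m h l, fam_pos m h (fam_mate h l)) | l.
     fam_valid m h l \<and> fam_pos m h l < fam_pos m h (fam_mate h l)}"

definition fam_boundary :: "nat \<Rightarrow> nat \<Rightarrow> fam_label \<Rightarrow> fam_label" where
  "fam_boundary m h l = fam_succ m h (fam_mate h l)"

context
  fixes m h :: nat
  assumes m: "m \<le> 1" and h: "1 \<le> h"
begin

lemma fam_index_pos: "fam_valid m h l \<Longrightarrow> fam_index m h (fam_pos m h l) = l"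
  using m h by (cases l) (auto simp: fam_index_def fam_size_def)

lemma fam_pos_surj:
  assumes v: "v \<in> {1..fam_size m h}"
  shows "\<exists>l. fam_valid m h l \<and> fam_pos m h l = v"
proof -
  have v1: "1 \<le> v" "v \<le> 12 * h + 2 * m - 6" using v unfolding fam_size_def by auto
  consider "v \<le> 4" | "m = 1" "v = 5" | "4 < v" "\<not> (m = 1 \<and> v = 5)" "v \<le> 4 * h + m"
    | "4 * h + m < v" "v \<le> 4 * h + 2 + m" | "4 * h + 2 + m < v" "v \<le> 12 * h + m - 6"
    | "12 * h + m - 6 < v"
    by arith
  then show ?thesis
  proof cases
    case 1
    then show ?thesis using v1 by (intro exI[of _ "Head (v - 1)"]) auto
  next
    case 2
    then show ?thesis by (intro exI[of _ "Extra 0"]) auto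
  next
    case 3
    define x where "x = v - 5 - m"
    have x: "x = 4 * (x div 4) + x mod 4" "x mod 4 < 4" by simp_all
    have "v = 5 + m + x" "x < 4 * h - 4" using 3 m unfolding x_def by auto
    then have "x div 4 + 2 \<le> h" "v = 5 + m + 4 * (x div 4) + x mod 4" using x by linarith+
    then show ?thesis using x by (intro exI[of _ "LBlock (x div 4) (x mod 4)"]) auto
  next
    case 4
    then show ?thesis by (intro exI[of _ "Mid (v - 4 * h - 1 - m)"]) auto
  next
    case 5
    define x where "x = v - 4 * h - 3 - m"
    have x: "x = 8 * (x div 8) + x mod 8" "x mod 8 < 8" by simp_all
    have "v = 4 * h + 3 + m + x" "x < 8 * h - 8" using 5 m h unfolding x_def by auto
    then have "x div 8 + 2 \<le> h" "v = 4 * h + 3 + m + 8 * (x div 8) + x mod 8" using x by linarith+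
    then show ?thesis using x by (intro exI[of _ "RBlock (x div 8) (x mod 8)"]) auto
  next
    case 6
    then have "m = 1" "v = fam_size m h" using v1 m by (auto simp: fam_size_def)
    then show ?thesis by (intro exI[of _ "Extra 1"]) auto
  qed
qed

lemma fam_pos_bij: "bij_betw (fam_pos m h) {l. fam_valid m h l} {1..fam_size m h}"
  unfolding bij_betw_def
proof
  show "inj_on (fam_pos m h) {l. fam_valid m h l}"
    using fam_index_pos by (intro inj_on_inverseI[of _ "fam_index m h"]) auto
  have "fam_pos m h ` {l. fam_valid m h l} \<subseteq> {1..fam_size m h}"
    using m h by (auto simp: fam_size_def elim!: fam_valid.elims)
  then show "fam_pos m h ` {l. fam_valid m h l} = {1..fam_size m h}"
    using fam_pos_surj by fastforce
qed

interpretation fam: labelled_diagram "fam_size m h" "{l. fam_valid m h l}" "fam_pos m h"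
  "fam_mate h" "fam_succ m h"
proof
  show "1 \<le> fam_size m h" using h by (simp add: fam_size_def)
  show "bij_betw (fam_pos m h) {l. fam_valid m h l} {1..fam_size m h}" by (rule fam_pos_bij)
  fix l assume l: "l \<in> {l. fam_valid m h l}"
  show "fam_mate h l \<in> {l. fam_valid m h l}" "fam_mate h (fam_mate h l) = l"
    using l by (cases l; force)+
  show "fam_mate h l \<noteq> l"
    using l by (cases l) (auto simp: less_Suc_eq numeral_2_eq_2)
  show "fam_succ m h l \<in> {l. fam_valid m h l}"
    "fam_pos m h (fam_succ m h l) = backbone_perm (fam_size m h) (fam_pos m h l)"
    using l m h by (cases l; force simp: fam_size_def backbone_perm_def)+
qed

text \<open>For m = 1 the labels Head 0 and Extra 0 (positions 1 and 5) form the boundary component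
  of length 2; all other boundary components have length 3.\<close>

lemma fam_boundary_3cycle:
  assumes l: "fam_valid m h l" and nb: "\<not> (m = 1 \<and> (l = Head 0 \<or> l = Extra 0))"
  shows "fam_boundary m h (fam_boundary m h (fam_boundary m h l)) = l" "fam_boundary m h l \<noteq> l"
proof -
  have "fam_boundary m h (fam_boundary m h (fam_boundary m h l)) = l \<and> fam_boundary m h l \<noteq> l"
  proof (cases l)
    case (Head k)
    then have "k = 0 \<or> k = 1 \<or> k = 2 \<or> k = 3" using l by auto
    then show ?thesis using Head nb m h by (elim disjE) (auto simp: fam_boundary_def)
  next
    case (LBlock u j)
    then have "j = 0 \<or> j = 1 \<or> j = 2 \<or> j = 3" "u + 2 \<le> h" using l by auto
    then show ?thesis using LBlock m h by (elim disjE) (auto simp: fam_boundary_def)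
  next
    case (Mid k)
    then have "k = 0 \<or> k = 1" using l by auto
    then show ?thesis using Mid m h by (elim disjE) (auto simp: fam_boundary_def)
  next
    case (RBlock t k)
    then have "k = 0 \<or> k = 1 \<or> k = 2 \<or> k = 3 \<or> k = 4 \<or> k = 5 \<or> k = 6 \<or> k = 7" "t + 2 \<le> h"
      using l by auto
    then show ?thesis using RBlock m h by (elim disjE) (auto simp: fam_boundary_def)
  next
    case (Extra k)
    then have "k = 1" "m = 1" using l nb by auto
    then show ?thesis using Extra h by (auto simp: fam_boundary_def)
  qed
  then show "fam_boundary m h (fam_boundary m h (fam_boundary m h l)) = l" "fam_boundary m h l \<noteq> l" by auto
qed

lemma fam_no_stack:
  assumes "fam_valid m h l" "fam_pos m h l < fam_pos m h (fam_mate h l)"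
  shows "fam_boundary m h (fam_succ m h l) \<noteq> fam_mate h l"
  using assms m h by (cases l) (auto simp: fam_boundary_def fam_size_def split: if_splits)

lemma fam_crossing:
  assumes l: "fam_valid m h l" and lt: "fam_pos m h l < fam_pos m h (fam_mate h l)"
  shows "\<exists>l'. fam_valid m h l' \<and> fam_pos m h l' < fam_pos m h (fam_mate h l') \<and>
    crosses (fam_pos m h l, fam_pos m h (fam_mate h l)) (fam_pos m h l', fam_pos m h (fam_mate h l'))"
proof (cases l)
  case (Head k)
  then consider "k = 0 \<or> k = 1" | "k = 2" | "k = 3" using l by fastforce
  then show ?thesis
  proof cases
    case 1
    then show ?thesis using Head h by (intro exI[of _ "Head 2"]) (auto simp: crosses_def)
  next
    case 2
    then show ?thesis using Head h by (intro exI[of _ "Head 0"]) (auto simp: crosses_def)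
  next
    case 3
    then show ?thesis using Head lt by simp
  qed
next
  case (LBlock u j)
  then show ?thesis using l h by (intro exI[of _ "Head 1"]) (auto simp: crosses_def)
next
  case (Mid k)
  then show ?thesis using l lt h by auto
next
  case (RBlock t k)
  then have k: "k < 8" "t + 2 \<le> h" using l by auto
  consider "k = 1" | "k = 3" | "k = 0 \<or> k = 2 \<or> k = 4 \<or> k = 5 \<or> k = 6 \<or> k = 7" using k by arith
  then show ?thesis
  proof cases
    case 1
    then show ?thesis using RBlock k by (intro exI[of _ "RBlock t 3"]) (auto simp: crosses_def)
  next
    case 2
    then show ?thesis using RBlock k by (intro exI[of _ "RBlock t 1"]) (auto simp: crosses_def)
  next
    case 3
    then show ?thesis using RBlock lt k by (elim disjE) auto
  qed
next
  case (Extra k)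
  then have "k = 0" "m = 1" using l lt h by (auto simp: fam_size_def less_Suc_eq numeral_2_eq_2)
  then show ?thesis using Extra h by (intro exI[of _ "Head 2"]) (auto simp: crosses_def fam_size_def)
qed

lemma fam_card_orbit_3:
  assumes "fam_valid m h l" "\<not> (m = 1 \<and> (l = Head 0 \<or> l = Extra 0))"
  shows "card (orbit (boundary_perm (fam_size m h) fam.arcs) (fam_pos m h l)) = 3"
  using fam.card_boundary_orbit_3[of l] fam_boundary_3cycle[OF assms] assms(1) by (simp add: fam_boundary_def)

lemma fam_arcs_eq: "fam_arcs m h = fam.arcs"
  by (simp add: fam_arcs_def fam.arcs_def)

lemma fam_shadow: "shadow1 (fam_size m h) (fam_arcs m h)"
  unfolding fam_arcs_eq
  by (rule fam.arcs_shadow) (use fam_crossing fam_no_stack in \<open>auto simp: fam_boundary_def\<close>)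

lemma fam_boundary_perm_pos:
  "fam_valid m h l \<Longrightarrow>
    boundary_perm (fam_size m h) fam.arcs (fam_pos m h l) = fam_pos m h (fam_boundary m h l)"
  using fam.boundary_perm_pos by (simp add: fam_boundary_def)

lemma fam_card_orbit_1: "card (orbit (boundary_perm (fam_size m h) fam.arcs) 1) = 3 - m"
proof (cases "m = 1")
  case True
  let ?P = "boundary_perm (fam_size m h) fam.arcs"
  have "?P 1 = 5" "?P 5 = 1"
    using True fam_boundary_perm_pos[of "Head 0"] fam_boundary_perm_pos[of "Extra 0"]
    by (simp_all add: fam_boundary_def)
  then show ?thesis using True card_orbit_eq_2[of ?P 1] by simp
next
  case False
  then have "m = 0" using m by simp
  then show ?thesis using fam_card_orbit_3[of "Head 0"] by simp
qed

lemma fam_genus: "has_genus (fam_size m h) (fam_arcs m h) h \<and> card (fam_arcs m h) = 6 * h - 3 + m"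
proof -
  let ?N = "fam_size m h" and ?P = "boundary_perm (fam_size m h) fam.arcs"
  have perm: "?P permutes {1..?N}" by (rule boundary_perm_permutes[OF fam.arcs_diagram])
  have one: "1 \<in> {1..?N}" using h by (simp add: fam_size_def)
  have others: "card (orbit ?P v) = 3" if v: "v \<in> {1..?N}" "v \<notin> orbit ?P 1" for v
  proof -
    obtain l where l: "fam_valid m h l" "fam_pos m h l = v" using fam_pos_surj v(1) by blast
    have "?P 1 \<in> orbit ?P 1" by (rule orbit.base)
    then have "\<not> (m = 1 \<and> (l = Head 0 \<or> l = Extra 0))"
      using v(2) l(2) fam_boundary_perm_pos[of "Head 0"]
        permutes_self_in_orbit[OF perm finite_atLeastAtMost, of 1]
      by (auto simp: fam_boundary_def)
    then show ?thesis using fam_card_orbit_3[OF l(1)] l(2) by simp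
  qed
  have "?N = (3 - m) + 3 * (card (orbit ?P ` {1..?N}) - 1)"
    using card_eq_by_orbits[OF perm finite_atLeastAtMost one others] fam_card_orbit_1 by simp
  then have r: "boundary_components ?N fam.arcs = 4 * h - 2 + m"
    using boundary_components_eq[OF fam.arcs_diagram] boundary_components_pos[OF fam.arcs_diagram] m h
    by (simp add: fam_size_def) linarith
  have "card fam.arcs = 6 * h - 3 + m" using fam.card_arcs m h by (simp add: fam_size_def)
  with r show ?thesis unfolding fam_arcs_eq has_genus_iff using h by simp
qed

end

section \<open>Realizable numbers of arcs\<close>

lemma two_arc_shadow: "shadow1 4 {(1,3),(2,4)} \<and> has_genus 4 {(1,3),(2,4)} 1"
proof -
  let ?A = "{(1::nat,3::nat),(2,4)}" and ?P = "boundary_perm 4 {(1,3),(2,4)}"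
  have range: "{1..4::nat} = {1,2,3,4}" by auto
  have d: "diagram1 4 ?A" unfolding diagram1_def by auto
  have sh: "shadow1 4 ?A" unfolding shadow1_def using d by (auto simp: range crosses_def incident_def)
  have perm: "?P permutes {1..4}" by (rule boundary_perm_permutes[OF d])
  have "arc_perm ?A 1 = 3" "arc_perm ?A 3 = 1" "arc_perm ?A 2 = 4" "arc_perm ?A 4 = 2"
    using arc_perm_arc[OF d] by auto
  then have P: "?P 1 = 4" "?P 4 = 3" "?P 3 = 2" "?P 2 = 1"
    by (simp_all add: boundary_perm_def backbone_perm_def)
  have "4 \<in> orbit ?P 1" using orbit.base[of ?P 1] P(1) by simp
  then have "3 \<in> orbit ?P 1" using orbit.step P(2) by metis
  then have "2 \<in> orbit ?P 1" using orbit.step P(3) by metis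
  then have "1 \<in> orbit ?P 1" using orbit.step P(4) by metis
  then have "{1..4} \<subseteq> orbit ?P 1"
    using \<open>2 \<in> orbit ?P 1\<close> \<open>3 \<in> orbit ?P 1\<close> \<open>4 \<in> orbit ?P 1\<close> unfolding range by auto
  then have "orbit ?P ` {1..4} = {orbit ?P 1}"
    using permutes_orbit_eq[OF perm finite_atLeastAtMost] by auto
  then have "card (orbit ?P ` {1..4}) = 1" by simp
  then have "boundary_components 4 ?A = 1" using boundary_components_eq[OF d] by simp
  then show ?thesis using sh by (simp add: has_genus_iff)
qed

definition shadow_realizable :: "nat \<Rightarrow> nat \<Rightarrow> bool" where
  "shadow_realizable g n \<longleftrightarrow> (\<exists>N A. shadow1 N A \<and> has_genus N A g \<and> card A = n)"

lemma shadow_realizable_add: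
  assumes "shadow_realizable g\<^sub>1 n\<^sub>1" "shadow_realizable g\<^sub>2 n\<^sub>2"
  shows "shadow_realizable (g\<^sub>1 + g\<^sub>2) (n\<^sub>1 + n\<^sub>2)"
proof -
  obtain N\<^sub>1 A\<^sub>1 N\<^sub>2 A\<^sub>2 where s: "shadow1 N\<^sub>1 A\<^sub>1" "has_genus N\<^sub>1 A\<^sub>1 g\<^sub>1" "card A\<^sub>1 = n\<^sub>1"
    "shadow1 N\<^sub>2 A\<^sub>2" "has_genus N\<^sub>2 A\<^sub>2 g\<^sub>2" "card A\<^sub>2 = n\<^sub>2"
    using assms unfolding shadow_realizable_def by blast
  have d: "diagram1 N\<^sub>1 A\<^sub>1" "diagram1 N\<^sub>2 A\<^sub>2" using s shadow_diagram by blast+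
  show ?thesis
    unfolding shadow_realizable_def
    using concat_shadow[OF d s(1,4)] has_genus_concat[OF d s(2,5)] card_concat_arcs[OF d] s(3,6)
    by blast
qed

lemma shadow_realizable_max:
  "1 \<le> h \<Longrightarrow> m \<le> 1 \<Longrightarrow> shadow_realizable h (6 * h - 3 + m)"
  unfolding shadow_realizable_def using fam_shadow fam_genus by blast

lemma shadow_realizable_genus_1:
  assumes "2 \<le> n" "n \<le> 4"
  shows "shadow_realizable 1 n"
proof -
  consider "n = 2" | "n = 3" | "n = 4" using assms by linarith
  then show ?thesis
  proof cases
    case 1
    have "card {(1::nat, 3::nat), (2, 4)} = 2" by simp
    then show ?thesis using 1 two_arc_shadow unfolding shadow_realizable_def by blast
  next
    case 2
    then show ?thesis using shadow_realizable_max[of 1 0] by simp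
  next
    case 3
    then show ?thesis using shadow_realizable_max[of 1 1] by simp
  qed
qed

lemma shadow_realizable_range:
  "1 \<le> g \<Longrightarrow> 2 * g \<le> n \<Longrightarrow> n \<le> 6 * g - 2 \<Longrightarrow> shadow_realizable g n"
proof (induction g arbitrary: n rule: nat_induct_at_least)
  case base
  then show ?case by (intro shadow_realizable_genus_1) auto
next
  case (Suc g)
  show ?case
  proof (cases "6 * Suc g - 3 \<le> n")
    case True
    then have "n = 6 * Suc g - 3 + (n - (6 * Suc g - 3))" "n - (6 * Suc g - 3) \<le> 1"
      using Suc.prems by auto
    then show ?thesis using shadow_realizable_max[of "Suc g" "n - (6 * Suc g - 3)"] by simp
  next
    case False
    define k where "k = (if n \<le> 6 * g then 2 else n - 6 * g + 2)"
    have k: "2 \<le> k" "k \<le> 4" "2 * g \<le> n - k" "n - k \<le> 6 * g - 2" "k \<le> n"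
      using False Suc.hyps Suc.prems unfolding k_def by auto
    then have "shadow_realizable (g + 1) (n - k + k)"
      using Suc.IH shadow_realizable_genus_1 shadow_realizable_add by blast
    then show ?thesis using k(5) by simp
  qed
qed

theorem theorem1:
  fixes g :: nat
  assumes "g \<ge> 1"
  shows "(\<forall>N A. shadow1 N A \<and> has_genus N A g \<longrightarrow>
            2 * g \<le> card A \<and> card A \<le> 6 * g - 2)
       \<and> finite {(N, A). shadow1 N A \<and> has_genus N A g}
       \<and> (\<forall>l. 2 * g \<le> l \<and> l \<le> 6 * g - 2 \<longrightarrow>
            (\<exists>N A. shadow1 N A \<and> has_genus N A g \<and> card A = l))"
proof (intro conjI allI impI)
  show bounds: "2 * g \<le> card A" "card A \<le> 6 * g - 2" if "shadow1 N A \<and> has_genus N A g" for N A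
    using shadow_card_arcs_bounds that by blast+
  have "N \<le> 12 * g \<and> A \<subseteq> {..12 * g} \<times> {..12 * g}" if "shadow1 N A" "has_genus N A g" for N A
    using bounds[of N A] that shadow_card_arcs[OF that(1)] diagram_arcs_subset[OF shadow_diagram[OF that(1)]]
    by fastforce
  then have "{(N, A). shadow1 N A \<and> has_genus N A g} \<subseteq> {..12 * g} \<times> Pow ({..12 * g} \<times> {..12 * g})"
    by auto
  then show "finite {(N, A). shadow1 N A \<and> has_genus N A g}"
    by (rule finite_subset) simp
  show "\<exists>N A. shadow1 N A \<and> has_genus N A g \<and> card A = l" if "2 * g \<le> l \<and> l \<le> 6 * g - 2" for l
    using shadow_realizable_range[OF assms] that unfolding shadow_realizable_def by blast
qed

end
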